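(* Let $k:\mathbb R\to[0,\infty)$ be continuous with $\int_{\mathbb R}k(x)\,dx=1$, satisfying (K1) there is $\lambda>0$ with $\int_{\mathbb R}k(x)e^{\lambda|x|}dx<+\infty$, and (K2) $k(x_1)>0$ and $k(x_2)>0$ for some $x_1>0$, $x_2<0$. Let $f\in C^1([0,1])$ satisfy (H): $f(0)=f(1)=0$, $f(u)>0$ for $u\in(0,1)$, $f'(0)>0$, and $f(u)\leqslant f'(0)u$ for $u\in(0,1)$. Define \[ c_l^*=\sup_{\lambda<0}\Big\{\lambda^{-1}\Big[\int_{\mathbb R}k(x)e^{\lambda x}dx-1+f'(0)\Big]\Big\},\qquad c_r^*=\inf_{\lambda>0}\Big\{\lambda^{-1}\Big[\int_{\mathbb R}k(x)e^{\lambda x}dx-1+f'(0)\Big]\Big\}, \] and $E(k)=\operatorname{sign}(J(k))\big[1-\inf_{\lambda\in\mathbb R}\int_{\mathbb R}k(x)e^{\lambda x}dx\big]$ with $J(k)=\int_{\mathbb R}k(x)x\,dx$. Then: (i) if $E(k)>f'(0)$, then $0<c_l^*<c_r^*$; (ii) if $E(k)=f'(0)$, then $0=c_l^*<c_r^*$; (iii) if $-f'(0)<E(k)<f'(0)$, then $c_l^*<0<c_r^*$; (iv) if $E(k)=-f'(0)$, then $c_l^*<c_r^*=0$; (v) if $E(k)<-f'(0)$, then $c_l^*<c_r^*<0$.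
   Context: $\operatorname{sign}(0)=0$. When $\int_{\mathbb R}k(x)e^{\lambda x}dx=+\infty$ the bracketed expressions are $+\infty$. The quantities $c_l^*$ and $c_r^*$ are the spreading speeds to the left and to the right of the equation $u_t=\int_{\mathbb R}k(x-y)u(t,y)dy-u+f(u)$. *)

theory Defs
  imports "HOL-Analysis.Analysis"
begin

definition expmom :: "(real \<Rightarrow> real) \<Rightarrow> real \<Rightarrow> ereal" where
  "expmom k l = enn2ereal (\<integral>\<^sup>+ x. ennreal (k x * exp (l * x)) \<partial>lborel)"

text \<open>The quantity l^(-1) [ integral k(x) e^(l x) dx - 1 + f'(0) ], computed in the extended reals
  (it is +infinity times 1/l when the integral diverges).\<close>
definition speedfun :: "(real \<Rightarrow> real) \<Rightarrow> real \<Rightarrow> real \<Rightarrow> ereal" where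
  "speedfun k d0 l = ereal (1 / l) * (expmom k l - 1 + ereal d0)"

definition c_left :: "(real \<Rightarrow> real) \<Rightarrow> real \<Rightarrow> ereal" where
  "c_left k d0 = (SUP l \<in> {..<0}. speedfun k d0 l)"

definition c_right :: "(real \<Rightarrow> real) \<Rightarrow> real \<Rightarrow> ereal" where
  "c_right k d0 = (INF l \<in> {0<..}. speedfun k d0 l)"

definition Jk :: "(real \<Rightarrow> real) \<Rightarrow> real" where
  "Jk k = (\<integral> x. k x * x \<partial>lborel)"

definition Ek :: "(real \<Rightarrow> real) \<Rightarrow> ereal" where
  "Ek k = ereal (sgn (Jk k)) * (1 - (INF l. expmom k l))"

end

theory Submission
  imports Defs
begin

(* Write M(l) for the exponential moment of k and d = f'(0), so that c_r* is the infimum over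
   l > 0 of (M(l) - 1 + d) / l.  Two lower bounds on M control this infimum: M(l) >= 1 + J(k) l,
   from e^t >= 1 + t, and M(l) >= c l^2 for l > 0, because k is positive near some x1 > 0.
   Together they give c_r* > J(k), and c_r* > 0 whenever inf M > 1 - d.  If M(l) < 1 - d for
   some l, that l must be positive when J(k) < 0, whence c_r* < 0; if inf M = 1 - d and
   J(k) < 0, near-minimisers of M stay away from l = 0, whence c_r* = 0.  As
   E(k) = sgn(J(k)) (1 - inf M), these cases are exactly E(k) > -d, E(k) < -d and E(k) = -d.
   Reflecting the kernel, x |-> k(-x), turns c_l* into -c_r*, J(k) into -J(k) and E(k) into
   -E(k), which gives the corresponding statements for c_l*. *)

definition right_speed :: "(real \<Rightarrow> ereal) \<Rightarrow> real \<Rightarrow> ereal" where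
  "right_speed M d = (INF l\<in>{0<..}. ereal (1 / l) * (M l - 1 + ereal d))"

lemma ereal_le_speed_iff:
  fixes X :: ereal
  assumes "l > 0"
  shows "ereal r \<le> ereal (1 / l) * (X - 1 + ereal d) \<longleftrightarrow> ereal (1 - d + r * l) \<le> X"
proof (cases X)
  case (real x)
  have "r \<le> (x - 1 + d) / l \<longleftrightarrow> 1 - d + r * l \<le> x"
    using assms by (simp add: pos_le_divide_eq algebra_simps)
  then show ?thesis using real by (simp add: one_ereal_def)
qed (use assms in \<open>simp_all add: one_ereal_def\<close>)

lemma steeper_line_below_linear_or_quadratic:
  fixes a b c e :: real
  assumes "a > 0" "c > 0"
  shows "\<exists>q>0. \<forall>l>0. e + (b + q) * l \<le> e + a + b * l \<or> e + (b + q) * l \<le> c * l\<^sup>2"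
proof -
  (* for l <= L the linear bound dominates the steeper line, for l >= L the quadratic one *)
  define L where "L = (\<bar>e\<bar> + \<bar>b\<bar> + 1) / c + 1"
  define q where "q = min 1 (a / L)"
  have L: "L \<ge> 1" "c * L \<ge> \<bar>e\<bar> + \<bar>b\<bar> + 1"
    using \<open>c > 0\<close> by (auto simp: L_def field_simps)
  have "e + (b + q) * l \<le> e + a + b * l \<or> e + (b + q) * l \<le> c * l\<^sup>2" if "l > 0" for l
  proof (cases "l \<le> L")
    case True
    have "q * l \<le> (a / L) * L"
      using True \<open>l > 0\<close> \<open>a > 0\<close> L by (intro mult_mono) (auto simp: q_def)
    then have "q * l \<le> a" using L by simp
    then show ?thesis by (simp add: distrib_right)
  next
    case False
    have "(\<bar>e\<bar> + \<bar>b\<bar> + 1) * l \<le> (c * L) * l"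
      using L \<open>l > 0\<close> by (intro mult_right_mono) auto
    also have "\<dots> \<le> c * l\<^sup>2"
      using False \<open>c > 0\<close> \<open>l > 0\<close> by (simp add: power2_eq_square)
    finally have "(\<bar>e\<bar> + \<bar>b\<bar> + 1) * l \<le> c * l\<^sup>2" .
    moreover have "\<bar>e\<bar> * 1 \<le> \<bar>e\<bar> * l"
      using False L by (intro mult_left_mono) auto
    moreover have "b * l \<le> \<bar>b\<bar> * l" "q \<le> 1"
      using \<open>l > 0\<close> by (auto simp: q_def mult_right_mono)
    moreover have "q * l \<le> l" using \<open>q \<le> 1\<close> \<open>l > 0\<close> by simp
    ultimately have "e + (b + q) * l \<le> c * l\<^sup>2"
      unfolding distrib_right using abs_ge_self[of e] by linarith
    then show ?thesis ..
  qed
  moreover have "q > 0" using assms L by (simp add: q_def)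
  ultimately show ?thesis by blast
qed

lemma right_speed_gt:
  assumes "a > 0" "c > 0"
    and quadratic: "\<And>l. l > 0 \<Longrightarrow> ereal (c * l\<^sup>2) \<le> M l"
    and linear: "\<And>l. l > 0 \<Longrightarrow> ereal (1 - d + a + b * l) \<le> M l"
  shows "ereal b < right_speed M d"
proof -
  obtain q where "q > 0"
    and gap: "\<And>l. l > 0 \<Longrightarrow>
      1 - d + (b + q) * l \<le> 1 - d + a + b * l \<or> 1 - d + (b + q) * l \<le> c * l\<^sup>2"
    using steeper_line_below_linear_or_quadratic[OF assms(1,2)] by blast
  have "ereal (b + q) \<le> ereal (1 / l) * (M l - 1 + ereal d)" if "l > 0" for l
    unfolding ereal_le_speed_iff[OF that]
    using gap[OF that] linear[OF that] quadratic[OF that] by (meson ereal_less_eq(3) order_trans)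
  then have "ereal (b + q) \<le> right_speed M d"
    unfolding right_speed_def by (intro INF_greatest) auto
  moreover have "ereal b < ereal (b + q)" using \<open>q > 0\<close> by simp
  ultimately show ?thesis by order
qed

lemma right_speed_neg:
  assumes "l > 0" "M l < ereal (1 - d)"
  shows "right_speed M d < 0"
proof -
  have "ereal (1 / l) * (M l - 1 + ereal d) < 0"
    using ereal_le_speed_iff[OF \<open>l > 0\<close>, of 0 "M l" d] assms(2)
    by (auto simp: not_le zero_ereal_def)
  moreover have "right_speed M d \<le> ereal (1 / l) * (M l - 1 + ereal d)"
    unfolding right_speed_def using \<open>l > 0\<close> by (intro INF_lower) auto
  ultimately show ?thesis by order
qed

lemma right_speed_zero:
  assumes "J < 0" "d > 0"
    and linear: "\<And>l. ereal (1 + J * l) \<le> M l"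
    and inf: "(INF l. M l) = ereal (1 - d)"
  shows "right_speed M d = 0"
proof (rule antisym)
  show "right_speed M d \<le> 0"
  proof (rule ereal_le_epsilon2)
    fix e :: real assume "e > 0"
    (* delta <= d/2 and M l >= 1 + J l force a near-minimiser l of M beyond d / (2 (-J)) *)
    define \<delta> where "\<delta> = min (d / 2) (e * d / (2 * - J))"
    have "e * d / (2 * - J) > 0" using assms \<open>e > 0\<close> by (intro divide_pos_pos) auto
    then have "\<delta> > 0" using \<open>d > 0\<close> by (simp add: \<delta>_def)
    then have "(INF l. M l) < ereal (1 - d + \<delta>)" using inf by simp
    then obtain l where l: "M l < ereal (1 - d + \<delta>)" by (auto simp: INF_less_iff)
    have "1 + J * l < 1 - d + \<delta>" using order.strict_trans1[OF linear[of l] l] by simp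
    then have "d / 2 < - J * l" by (simp add: \<delta>_def)
    then have "d / (2 * - J) < l"
      using \<open>J < 0\<close> by (simp add: neg_minus_divide_less_eq mult_ac)
    moreover have "0 < d / (2 * - J)" using assms by (intro divide_pos_pos) auto
    ultimately have "l > 0" by linarith
    have "e * (d / (2 * - J)) < e * l"
      using \<open>d / (2 * - J) < l\<close> \<open>e > 0\<close> by (rule mult_strict_left_mono)
    then have "\<delta> < e * l" by (simp add: \<delta>_def)
    then have "M l < ereal (1 - d + e * l)"
      using l by (simp add: order.strict_trans)
    then have "ereal (1 / l) * (M l - 1 + ereal d) < ereal e"
      using ereal_le_speed_iff[OF \<open>l > 0\<close>, of e "M l" d] by (meson not_le)
    moreover have "right_speed M d \<le> ereal (1 / l) * (M l - 1 + ereal d)"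
      unfolding right_speed_def using \<open>l > 0\<close> by (intro INF_lower) auto
    ultimately show "right_speed M d \<le> 0 + ereal e" by simp
  qed
next
  have "ereal 0 \<le> ereal (1 / l) * (M l - 1 + ereal d)" if "l > 0" for l
    unfolding ereal_le_speed_iff[OF that] using INF_lower[of l UNIV M] inf by simp
  then show "0 \<le> right_speed M d"
    unfolding right_speed_def zero_ereal_def by (intro INF_greatest) auto
qed

lemma quarter_square_le_exp:
  fixes t :: real
  assumes "t \<ge> 0"
  shows "t\<^sup>2 / 4 \<le> exp t"
proof -
  have "t\<^sup>2 / 4 \<le> (1 + t / 2)\<^sup>2"
    using assms by (simp add: power2_eq_square field_simps)
  also have "\<dots> \<le> exp t"
    using exp_ge_one_plus_x_over_n_power_n[where x=t and n=2] assms by simp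
  finally show ?thesis .
qed

lemma expmom_ge_quadratic:
  assumes "isCont k x0" "k x0 > 0" "x0 > 0"
  shows "\<exists>c>0. \<forall>l>0. ereal (c * l\<^sup>2) \<le> expmom k l"
proof -
  obtain r where "r > 0" and r: "\<And>y. dist y x0 < r \<Longrightarrow> dist (k y) (k x0) < k x0 / 2"
    using assms(1,2) unfolding continuous_at_eps_delta by (metis half_gt_zero)
  define \<rho> where "\<rho> = min r (x0 / 2)"
  define C where "C = k x0 / 2 * (x0\<^sup>2 / 16)"
  define I where "I = {x0 - \<rho> <..< x0 + \<rho>}"
  have "\<rho> > 0" "C > 0" using \<open>r > 0\<close> assms by (auto simp: \<rho>_def C_def)
  have "ereal (2 * \<rho> * C * l\<^sup>2) \<le> expmom k l" if "l > 0" for l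
  proof -
    have pointwise: "ennreal (C * l\<^sup>2) * indicator I y \<le> ennreal (k y * exp (l * y))" for y
    proof (cases "y \<in> I")
      case True
      then have "\<bar>y - x0\<bar> < \<rho>" by (auto simp: I_def abs_less_iff)
      then have "\<bar>k y - k x0\<bar> < k x0 / 2" and "\<bar>y - x0\<bar> < x0 / 2"
        using r[of y] by (auto simp: \<rho>_def dist_real_def)
      then have "k x0 / 2 \<le> k y" and "x0 / 2 \<le> y"
        by (auto simp only: abs_less_iff)
      have "(l * (x0 / 2))\<^sup>2 / 4 \<le> exp (l * (x0 / 2))"
        using \<open>l > 0\<close> assms(3) by (intro quarter_square_le_exp) simp
      also have "\<dots> \<le> exp (l * y)"
        using \<open>x0 / 2 \<le> y\<close> \<open>l > 0\<close> by simp
      finally have "(l * x0)\<^sup>2 / 16 \<le> exp (l * y)"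
        by (simp add: power_divide)
      have "C * l\<^sup>2 = k x0 / 2 * ((l * x0)\<^sup>2 / 16)"
        by (simp add: C_def power_mult_distrib)
      also have "\<dots> \<le> k y * exp (l * y)"
        using \<open>k x0 / 2 \<le> k y\<close> \<open>(l * x0)\<^sup>2 / 16 \<le> exp (l * y)\<close> assms(2)
        by (intro mult_mono) auto
      finally have "C * l\<^sup>2 \<le> k y * exp (l * y)" .
      then show ?thesis using True by (simp add: ennreal_leI)
    qed simp
    have "ennreal (2 * \<rho> * C * l\<^sup>2) = ennreal (C * l\<^sup>2) * emeasure lborel I"
      using \<open>\<rho> > 0\<close> \<open>C > 0\<close> by (simp add: I_def ennreal_mult' mult_ac)
    also have "\<dots> = (\<integral>\<^sup>+ y. ennreal (C * l\<^sup>2) * indicator I y \<partial>lborel)"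
      by (rule nn_integral_cmult_indicator[symmetric]) (simp add: I_def)
    also have "\<dots> \<le> (\<integral>\<^sup>+ y. ennreal (k y * exp (l * y)) \<partial>lborel)"
      by (intro nn_integral_mono pointwise)
    finally show ?thesis
      unfolding expmom_def using \<open>\<rho> > 0\<close> \<open>C > 0\<close> by (simp add: less_eq_ennreal.rep_eq)
  qed
  then show ?thesis
    using \<open>\<rho> > 0\<close> \<open>C > 0\<close> by (intro exI[of _ "2 * \<rho> * C"]) auto
qed

lemma expmom_reflect:
  assumes [measurable]: "k \<in> borel_measurable borel"
  shows "expmom (\<lambda>x. k (- x)) l = expmom k (- l)"
  unfolding expmom_def
  using nn_integral_real_affine[of "\<lambda>x. ennreal (k x * exp (- l * x))" "-1" 0] by simp

lemma Jk_reflect: "Jk (\<lambda>x. k (- x)) = - Jk k"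
  unfolding Jk_def using lborel_integral_real_affine[of "-1" "\<lambda>x. k x * x" 0] by simp

lemma Ek_reflect:
  assumes "k \<in> borel_measurable borel"
  shows "Ek (\<lambda>x. k (- x)) = - Ek k"
proof -
  have "(INF l. expmom k (- l)) = (INF l. expmom k l)"
    by (rule INF_eq) (metis UNIV_I minus_minus order_refl)+
  then show ?thesis
    by (simp add: Ek_def Jk_reflect expmom_reflect[OF assms] sgn_minus flip: uminus_ereal.simps(1))
qed

lemma c_right_eq_right_speed: "c_right k d = right_speed (expmom k) d"
  by (simp add: c_right_def speedfun_def right_speed_def)

lemma speedfun_reflect:
  assumes "k \<in> borel_measurable borel"
  shows "speedfun k d (- l) = - speedfun (\<lambda>x. k (- x)) d l"
  by (simp add: speedfun_def expmom_reflect[OF assms] flip: uminus_ereal.simps(1))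

lemma c_left_reflect:
  assumes "k \<in> borel_measurable borel"
  shows "c_left k d = - c_right (\<lambda>x. k (- x)) d"
proof -
  have "c_left k d = (SUP l\<in>uminus ` {0<..}. speedfun k d l)"
    by (simp add: c_left_def)
  also have "\<dots> = (SUP l\<in>{0<..}. - speedfun (\<lambda>x. k (- x)) d l)"
    by (simp only: image_comp o_def speedfun_reflect[OF assms])
  also have "\<dots> = - c_right (\<lambda>x. k (- x)) d"
    by (simp add: c_right_def ereal_SUP_uminus_eq)
  finally show ?thesis .
qed

locale dispersal_kernel =
  fixes k :: "real \<Rightarrow> real"
  assumes k_continuous: "continuous_on UNIV k"
    and k_nonneg: "\<And>x. k x \<ge> 0"
    and k_integrable: "integrable lborel k"
    and k_mass: "(\<integral> x. k x \<partial>lborel) = 1"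
    and k_exp_moment: "\<exists>l>0. integrable lborel (\<lambda>x. k x * exp (l * \<bar>x\<bar>))"
    and k_positive_both_sides: "\<exists>x1 x2. x1 > 0 \<and> x2 < 0 \<and> k x1 > 0 \<and> k x2 > 0"
begin

lemma k_borel_measurable [measurable]: "k \<in> borel_measurable borel"
  using k_continuous by (rule borel_measurable_continuous_onI)

lemma reflected: "dispersal_kernel (\<lambda>x. k (- x))"
proof
  show "continuous_on UNIV (\<lambda>x. k (- x))"
    by (rule continuous_on_compose2[OF k_continuous]) (auto intro: continuous_intros)
  show "integrable lborel (\<lambda>x. k (- x))"
    using lborel_integrable_real_affine[OF k_integrable, of "-1" 0] by simp
  show "(\<integral> x. k (- x) \<partial>lborel) = 1"
    using lborel_integral_real_affine[of "-1" k 0] k_mass by simp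
  obtain l where "l > 0" and int: "integrable lborel (\<lambda>x. k x * exp (l * \<bar>x\<bar>))"
    using k_exp_moment by blast
  have "integrable lborel (\<lambda>x. k (- x) * exp (l * \<bar>x\<bar>))"
    using lborel_integrable_real_affine[OF int, of "-1" 0] by simp
  then show "\<exists>l>0. integrable lborel (\<lambda>x. k (- x) * exp (l * \<bar>x\<bar>))"
    using \<open>l > 0\<close> by blast
  show "\<exists>x1 x2. x1 > 0 \<and> x2 < 0 \<and> k (- x1) > 0 \<and> k (- x2) > 0"
  proof -
    obtain x1 x2 where "x1 > 0" "x2 < 0" "k x1 > 0" "k x2 > 0"
      using k_positive_both_sides by blast
    then show ?thesis by (intro exI[of _ "- x2"] exI[of _ "- x1"]) simp
  qed
qed (rule k_nonneg)

lemma expmom_0: "expmom k 0 = 1"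
  using nn_integral_eq_integral[OF k_integrable] k_nonneg k_mass
  by (simp add: expmom_def one_ennreal.rep_eq)

lemma integrable_first_moment: "integrable lborel (\<lambda>x. k x * x)"
proof -
  obtain l where "l > 0" and int: "integrable lborel (\<lambda>x. k x * exp (l * \<bar>x\<bar>))"
    using k_exp_moment by blast
  have abs_le: "\<bar>x\<bar> \<le> exp (l * \<bar>x\<bar>) / l" for x
  proof -
    have "l * \<bar>x\<bar> \<le> exp (l * \<bar>x\<bar>)" using exp_ge_add_one_self[of "l * \<bar>x\<bar>"] by linarith
    then show ?thesis using \<open>l > 0\<close> by (simp add: field_simps)
  qed
  have "k x * \<bar>x\<bar> \<le> k x * (exp (l * \<bar>x\<bar>) / l)" for x
    using abs_le[of x] k_nonneg[of x] by (rule mult_left_mono)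
  then have bound: "norm (k x * x) \<le> norm (k x * exp (l * \<bar>x\<bar>) / l)" for x
    using k_nonneg[of x] \<open>l > 0\<close> by (simp add: abs_mult)
  show ?thesis
  proof (rule Bochner_Integration.integrable_bound)
    show "integrable lborel (\<lambda>x. k x * exp (l * \<bar>x\<bar>) / l)" using int by simp
    show "(\<lambda>x. k x * x) \<in> borel_measurable lborel" by measurable
  qed (use bound in simp)
qed

lemma expmom_ge_linear: "ereal (1 + Jk k * l) \<le> expmom k l"
proof (cases "integrable lborel (\<lambda>x. k x * exp (l * x))")
  case True
  have "1 + Jk k * l = (\<integral> x. k x + l * (k x * x) \<partial>lborel)"
    using k_integrable integrable_first_moment k_mass by (simp add: Jk_def)
  also have "\<dots> \<le> (\<integral> x. k x * exp (l * x) \<partial>lborel)"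
  proof (rule integral_mono)
    fix x
    have "k x * (1 + l * x) \<le> k x * exp (l * x)"
      using k_nonneg[of x] exp_ge_add_one_self[of "l * x"] by (rule mult_left_mono[rotated])
    then show "k x + l * (k x * x) \<le> k x * exp (l * x)"
      by (simp add: algebra_simps)
  qed (use True k_integrable integrable_first_moment in auto)
  finally show ?thesis
    using nn_integral_eq_integral[OF True] k_nonneg by (simp add: expmom_def)
next
  case False
  then have "(\<integral>\<^sup>+ x. ennreal (k x * exp (l * x)) \<partial>lborel) = \<infinity>"
    using k_nonneg by (auto intro: integrableI_nonneg simp: top.not_eq_extremum)
  then show ?thesis by (simp add: expmom_def)
qed

lemma expmom_quadratic_growth: "\<exists>c>0. \<forall>l>0. ereal (c * l\<^sup>2) \<le> expmom k l"
proof -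
  obtain x1 where "x1 > 0" "k x1 > 0" using k_positive_both_sides by blast
  moreover have "isCont k x1" using k_continuous by (simp add: continuous_on_eq_continuous_at)
  ultimately show ?thesis using expmom_ge_quadratic by blast
qed

lemma INF_expmom_realE:
  obtains m where "(INF l. expmom k l) = ereal m" "0 \<le> m" "m \<le> 1"
    "Ek k = ereal (sgn (Jk k) * (1 - m))"
proof -
  have "(INF l. expmom k l) \<le> 1" using INF_lower[of 0 UNIV "expmom k"] expmom_0 by simp
  moreover have "0 \<le> (INF l. expmom k l)" by (simp add: expmom_def INF_greatest)
  ultimately show ?thesis
    using that by (cases "INF l. expmom k l") (auto simp: Ek_def one_ereal_def)
qed

lemma Jk_neg_if_Ek_neg:
  assumes "Ek k < 0"
  shows "Jk k < 0"
proof (rule ccontr)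
  obtain m where "m \<le> 1" "Ek k = ereal (sgn (Jk k) * (1 - m))" using INF_expmom_realE by blast
  moreover assume "\<not> Jk k < 0"
  ultimately have "0 \<le> Ek k" by (simp add: sgn_if)
  with assms show False by simp
qed

lemma c_right_gt_Jk:
  assumes "d > 0"
  shows "ereal (Jk k) < c_right k d"
proof -
  obtain c where "c > 0" "\<And>l. l > 0 \<Longrightarrow> ereal (c * l\<^sup>2) \<le> expmom k l"
    using expmom_quadratic_growth by blast
  moreover have "ereal (1 - d + d + Jk k * l) \<le> expmom k l" for l
    using expmom_ge_linear by simp
  ultimately show ?thesis
    unfolding c_right_eq_right_speed using assms by (intro right_speed_gt[where a = d]) auto
qed

lemma c_right_pos:
  assumes "d > 0" "- ereal d < Ek k"
  shows "0 < c_right k d"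
proof (cases "Jk k < 0")
  case True
  obtain m where m: "(INF l. expmom k l) = ereal m" and "Ek k = ereal (sgn (Jk k) * (1 - m))"
    using INF_expmom_realE by blast
  then have "1 - d < m" using True assms(2) by simp
  obtain c where "c > 0" "\<And>l. l > 0 \<Longrightarrow> ereal (c * l\<^sup>2) \<le> expmom k l"
    using expmom_quadratic_growth by blast
  moreover have "ereal (1 - d + (m - (1 - d)) + 0 * l) \<le> expmom k l" for l
    using INF_lower[of l UNIV "expmom k"] m by simp
  ultimately have "ereal 0 < right_speed (expmom k) d"
    using \<open>1 - d < m\<close> by (intro right_speed_gt[where a = "m - (1 - d)"]) auto
  then show ?thesis by (simp add: c_right_eq_right_speed zero_ereal_def)
next
  case False
  then have "0 \<le> ereal (Jk k)" by simp
  then show ?thesis using c_right_gt_Jk[OF assms(1)] by order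
qed

lemma c_right_neg:
  assumes "d > 0" "Ek k < - ereal d"
  shows "c_right k d < 0"
proof -
  have "Jk k < 0" using assms by (intro Jk_neg_if_Ek_neg) (simp add: order.strict_trans)
  obtain m where m: "(INF l. expmom k l) = ereal m" and "Ek k = ereal (sgn (Jk k) * (1 - m))"
    using INF_expmom_realE by blast
  then have "(INF l. expmom k l) < ereal (1 - d)"
    using \<open>Jk k < 0\<close> assms(2) by simp
  then obtain l where l: "expmom k l < ereal (1 - d)" by (auto simp: INF_less_iff)
  have "l > 0"
  proof (rule ccontr)
    assume "\<not> l > 0"
    then have "0 \<le> Jk k * l" using \<open>Jk k < 0\<close> by (simp add: mult_nonpos_nonpos)
    then have "ereal (1 - d) < ereal (1 + Jk k * l)" using \<open>d > 0\<close> by simp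
    then show False using l expmom_ge_linear[of l] by order
  qed
  then show ?thesis unfolding c_right_eq_right_speed using l by (rule right_speed_neg)
qed

lemma c_right_zero:
  assumes "d > 0" "Ek k = - ereal d"
  shows "c_right k d = 0"
proof -
  have "Jk k < 0" using assms by (intro Jk_neg_if_Ek_neg) simp
  obtain m where m: "(INF l. expmom k l) = ereal m" and "Ek k = ereal (sgn (Jk k) * (1 - m))"
    using INF_expmom_realE by blast
  then have "(INF l. expmom k l) = ereal (1 - d)"
    using \<open>Jk k < 0\<close> assms(2) by simp
  then show ?thesis
    unfolding c_right_eq_right_speed using \<open>Jk k < 0\<close> \<open>d > 0\<close> expmom_ge_linear
    by (intro right_speed_zero) auto
qed

lemma c_left_lt_Jk:
  assumes "d > 0"
  shows "c_left k d < ereal (Jk k)"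
  using dispersal_kernel.c_right_gt_Jk[OF reflected assms]
  by (simp add: c_left_reflect[OF k_borel_measurable] Jk_reflect ereal_uminus_less_reorder)

lemma c_left_neg:
  assumes "d > 0" "Ek k < ereal d"
  shows "c_left k d < 0"
proof -
  have "- ereal d < Ek (\<lambda>x. k (- x))"
    using assms(2) by (cases "Ek k") (simp_all add: Ek_reflect[OF k_borel_measurable])
  then show ?thesis
    using dispersal_kernel.c_right_pos[OF reflected assms(1)]
    by (simp add: c_left_reflect[OF k_borel_measurable] ereal_uminus_less_reorder)
qed

lemma c_left_pos:
  assumes "d > 0" "ereal d < Ek k"
  shows "0 < c_left k d"
proof -
  have "Ek (\<lambda>x. k (- x)) < - ereal d"
    using assms(2) by (cases "Ek k") (simp_all add: Ek_reflect[OF k_borel_measurable])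
  then show ?thesis
    using dispersal_kernel.c_right_neg[OF reflected assms(1)]
    by (simp add: c_left_reflect[OF k_borel_measurable] ereal_uminus_less_reorder)
qed

lemma c_left_zero:
  assumes "d > 0" "Ek k = ereal d"
  shows "c_left k d = 0"
  using dispersal_kernel.c_right_zero[OF reflected assms(1)] assms(2)
  by (simp add: c_left_reflect[OF k_borel_measurable] Ek_reflect[OF k_borel_measurable])

end

theorem theorem2p4:
  fixes k :: "real \<Rightarrow> real" and f f' :: "real \<Rightarrow> real"
  assumes k_cont: "continuous_on UNIV k"
    and k_nonneg: "\<And>x. k x \<ge> 0"
    and k_int: "integrable lborel k"
    and k_mass: "(\<integral> x. k x \<partial>lborel) = 1"
    and K1: "\<exists>l>0. integrable lborel (\<lambda>x. k x * exp (l * \<bar>x\<bar>))"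
    and K2: "\<exists>x1 x2. x1 > 0 \<and> x2 < 0 \<and> k x1 > 0 \<and> k x2 > 0"
    and f_deriv: "\<And>u. u \<in> {0..1} \<Longrightarrow> (f has_real_derivative f' u) (at u within {0..1})"
    and f'_cont: "continuous_on {0..1} f'"
    and H0: "f 0 = 0" and H1: "f 1 = 0"
    and Hpos: "\<And>u. u \<in> {0<..<1} \<Longrightarrow> f u > 0"
    and Hd0: "f' 0 > 0"
    and KPP: "\<And>u. u \<in> {0<..<1} \<Longrightarrow> f u \<le> f' 0 * u"
  shows "(Ek k > ereal (f' 0) \<longrightarrow> 0 < c_left k (f' 0) \<and> c_left k (f' 0) < c_right k (f' 0))
       \<and> (Ek k = ereal (f' 0) \<longrightarrow> 0 = c_left k (f' 0) \<and> c_left k (f' 0) < c_right k (f' 0))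
       \<and> (- ereal (f' 0) < Ek k \<and> Ek k < ereal (f' 0) \<longrightarrow> c_left k (f' 0) < 0 \<and> 0 < c_right k (f' 0))
       \<and> (Ek k = - ereal (f' 0) \<longrightarrow> c_left k (f' 0) < c_right k (f' 0) \<and> c_right k (f' 0) = 0)
       \<and> (Ek k < - ereal (f' 0) \<longrightarrow> c_left k (f' 0) < c_right k (f' 0) \<and> c_right k (f' 0) < 0)"
proof -
  interpret dispersal_kernel k
    using k_cont k_nonneg k_int k_mass K1 K2 by unfold_locales
  have "c_left k (f' 0) < c_right k (f' 0)"
    using c_left_lt_Jk[OF Hd0] c_right_gt_Jk[OF Hd0] by order
  with Hd0 show ?thesis
    using c_left_pos c_left_zero c_left_neg c_right_pos c_right_zero c_right_neg by auto
qed

end
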